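(* Let $I\in[0,1)$, let $Z\ge 0$ and $L\ge 1$ be integers, and define $$P_s^{(TR)}(L)=1-\sum_{k=0}^{Z+1}\binom{k+Z}{k}I^k(1-I)^{Z+1}\Big[1-Q(L,Z+1-k,0)\Big],$$ $$P_s^{(TU)}=1-\sum_{k=0}^{Z+1}\binom{k+Z}{k}I^k(1-I)^{Z+1}\Big[1-P(Z+1-k)\Big].$$ Then: (i) if $0<I<1$, $P_s^{(TR)}(L)$ is strictly increasing in $L$; (ii) for every $L\ge1$, $P_s^{(TR)}(L)\le P_s^{(TU)}$, and the inequality is strict when $0<I<1$; (iii) $P_s^{(TR)}(L)<1$ for every $L\ge1$ whenever $0\le I<1$ (in particular also when $0.5\le I<1$, where $P_s^{(TU)}=1$).
   Context: Fix $I\in[0,1)$ (the probability that the next mined block is produced by the attacker). Let $\delta_1,\delta_2,\dots$ be i.i.d. random vectors in $\mathbb{Z}^2$ with $\delta_t=[-1,0]^T$ with probability $I$ and $\delta_t=[1,1]^T$ with probability $1-I$; for a starting point $[m,n]^T$ let $s_T=[m,n]^T+\sum_{t=1}^T\delta_t$. With $\mathcal{L}_1=\{[m',n']^T: m'=-1\}$ and $\mathcal{L}_2=\{[m',n']^T: n'=l\}$, let $$Q(l,m,n)=\sum_{T=0}^{\infty}\Pr\big(s_T\in\mathcal{L}_1,\ s_{T'}\notin\mathcal{L}_1\cup\mathcal{L}_2\ \forall\, T'<T\big)$$ be the probability that the walk hits $\mathcal{L}_1$ before $\mathcal{L}_2$. Let $P(m)=\left(\frac{I}{1-I}\right)^{m+1}$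 if $0\le I<0.5$ and $P(m)=1$ if $0.5\le I\le1$. $P_s^{(TR)}(L)$ is the success probability of a time-restricted double-spending attack (confirmation depth $Z$, attacker gives up once the honest branch has grown $L$ blocks past confirmation), and $P_s^{(TU)}$ that of the time-unrestricted attack. *)

theory Defs
  imports "HOL-Analysis.Analysis"
begin

text \<open>A realisation of the first T increments is a list ds of booleans:
  True means delta_t = [-1,0] (attacker block, prob. I),
  False means delta_t = [1,1] (honest block, prob. 1-I).\<close>

definition step_prob :: "real \<Rightarrow> bool list \<Rightarrow> real" where
  "step_prob I ds = I ^ length (filter id ds) * (1 - I) ^ length (filter Not ds)"

definition walk_pos :: "int \<Rightarrow> int \<Rightarrow> bool list \<Rightarrow> nat \<Rightarrow> int \<times> int" where
  "walk_pos m n ds t =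
     (m + (\<Sum>i<t. if ds ! i then -1 else 1), n + (\<Sum>i<t. if ds ! i then 0 else 1))"

definition hit_first :: "int \<Rightarrow> int \<Rightarrow> int \<Rightarrow> bool list \<Rightarrow> bool" where
  "hit_first l m n ds \<longleftrightarrow>
     fst (walk_pos m n ds (length ds)) = -1 \<and>
     (\<forall>T'<length ds. fst (walk_pos m n ds T') \<noteq> -1 \<and> snd (walk_pos m n ds T') \<noteq> l)"

definition Q :: "real \<Rightarrow> int \<Rightarrow> int \<Rightarrow> int \<Rightarrow> real" where
  "Q I l m n = (\<Sum>T. \<Sum>ds\<in>{ds :: bool list. length ds = T \<and> hit_first l m n ds}. step_prob I ds)"

definition Pfun :: "real \<Rightarrow> nat \<Rightarrow> real" where
  "Pfun I m = (if 0 \<le> I \<and> I < 1/2 then (I / (1 - I)) ^ (m + 1) else 1)"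

definition Ps_TR :: "real \<Rightarrow> nat \<Rightarrow> nat \<Rightarrow> real" where
  "Ps_TR I Z L = 1 - (\<Sum>k=0..Z+1. real ((k + Z) choose k) * I ^ k * (1 - I) ^ (Z + 1)
                        * (1 - Q I (int L) (int (Z + 1 - k)) 0))"

definition Ps_TU :: "real \<Rightarrow> nat \<Rightarrow> real" where
  "Ps_TU I Z = 1 - (\<Sum>k=0..Z+1. real ((k + Z) choose k) * I ^ k * (1 - I) ^ (Z + 1)
                        * (1 - Pfun I (Z + 1 - k)))"

end

theory Submission
  imports Defs
begin

text \<open>Q(l,m,n) is the limit of the probabilities h_N(m,n) of hitting L1 before L2 within N
  steps, which satisfy the first-step recursion h_{N+1}(m,n) = I h_N(m-1,n) + (1-I) h_N(m+1,n+1),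
  so every estimate is a comparison with an explicit super- or subsolution by induction on N.
  If r >= 0 solves r = I + (1-I) r^2 (r = I/(1-I) for I < 1/2, r = 1 otherwise), then
  r^(m+1) (1 - ((1-I) r)^(l-n)) is a supersolution; this gives Q(l,m,0) < 1 and Q(l,m,0) <= P(m),
  strictly when I > 0. Raising the barrier from l1 to l2 > l1 gains at least the probability
  ((1-I) I)^l1 I^(m+1) of the paths that alternate honest and attacker blocks up to height l1 and
  then give the attacker m+1 blocks in a row, so Q is strictly increasing in l. Both success
  probabilities are 1 minus nonnegative combinations of the terms 1 - Q resp. 1 - P, so the claims
  follow termwise.\<close>

lemma walk_pos_0: "walk_pos m n ds 0 = (m, n)"
  unfolding walk_pos_def by simp

lemma walk_pos_Cons:
  "walk_pos m n (d # ds) (Suc t) = walk_pos (if d then m - 1 else m + 1) (if d then n else n + 1) ds t"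
  by (simp only: walk_pos_def sum.lessThan_Suc_shift nth_Cons_0 nth_Cons_Suc) auto

lemma hit_first_Nil: "hit_first l m n [] \<longleftrightarrow> m = -1"
  unfolding hit_first_def by (simp add: walk_pos_0)

lemma hit_first_Cons:
  "hit_first l m n (d # ds) \<longleftrightarrow>
     m \<noteq> -1 \<and> n \<noteq> l \<and> hit_first l (if d then m - 1 else m + 1) (if d then n else n + 1) ds"
  unfolding hit_first_def by (simp only: length_Cons All_less_Suc2 walk_pos_Cons walk_pos_0) auto

lemma step_prob_Nil: "step_prob I [] = 1"
  by (simp add: step_prob_def)

lemma step_prob_Cons: "step_prob I (d # ds) = (if d then I else 1 - I) * step_prob I ds"
  by (simp add: step_prob_def)

lemma finite_bool_lists_length_eq: "finite {ds :: bool list. length ds = T \<and> P ds}"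
  by (rule finite_subset[OF _ finite_lists_length_eq[of UNIV T]]) auto

definition hit_prob_at :: "real \<Rightarrow> int \<Rightarrow> int \<Rightarrow> int \<Rightarrow> nat \<Rightarrow> real" where
  "hit_prob_at I l m n T = (\<Sum>ds\<in>{ds. length ds = T \<and> hit_first l m n ds}. step_prob I ds)"

fun hit_prob_before :: "real \<Rightarrow> int \<Rightarrow> nat \<Rightarrow> int \<Rightarrow> int \<Rightarrow> real" where
  "hit_prob_before I l 0 m n = 0"
| "hit_prob_before I l (Suc N) m n =
     (if m = -1 then 1 else if n = l then 0
      else I * hit_prob_before I l N (m - 1) n + (1 - I) * hit_prob_before I l N (m + 1) (n + 1))"

lemma hit_prob_at_0: "hit_prob_at I l m n 0 = (if m = -1 then 1 else 0)"
proof -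
  have "{ds :: bool list. length ds = 0 \<and> hit_first l m n ds} = (if m = -1 then {[]} else {})"
    by (auto simp: hit_first_Nil)
  then show ?thesis
    unfolding hit_prob_at_def by (simp add: step_prob_Nil)
qed

lemma hit_prob_at_Suc:
  "hit_prob_at I l m n (Suc T) =
     (if m = -1 \<or> n = l then 0
      else I * hit_prob_at I l (m - 1) n T + (1 - I) * hit_prob_at I l (m + 1) (n + 1) T)"
proof (cases "m = -1 \<or> n = l")
  case True
  then have no_hit: "{ds :: bool list. length ds = Suc T \<and> hit_first l m n ds} = {}"
    by (auto simp: length_Suc_conv hit_first_Cons)
  show ?thesis
    using True unfolding hit_prob_at_def no_hit by simp
next
  case False
  define A where "A = {ds :: bool list. length ds = T \<and> hit_first l (m - 1) n ds}"
  define H where "H = {ds :: bool list. length ds = T \<and> hit_first l (m + 1) (n + 1) ds}"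
  have split: "{ds. length ds = Suc T \<and> hit_first l m n ds} = Cons True ` A \<union> Cons False ` H"
    using False unfolding A_def H_def
    by (auto simp: length_Suc_conv hit_first_Cons split: if_splits)
  have "hit_prob_at I l m n (Suc T) = sum (step_prob I) (Cons True ` A) + sum (step_prob I) (Cons False ` H)"
    unfolding hit_prob_at_def split
    by (rule sum.union_disjoint) (auto simp: A_def H_def finite_bool_lists_length_eq)
  also have "sum (step_prob I) (Cons True ` A) = I * hit_prob_at I l (m - 1) n T"
    by (subst sum.reindex) (auto simp: hit_prob_at_def A_def step_prob_Cons sum_distrib_left)
  also have "sum (step_prob I) (Cons False ` H) = (1 - I) * hit_prob_at I l (m + 1) (n + 1) T"
    by (subst sum.reindex) (auto simp: hit_prob_at_def H_def step_prob_Cons sum_distrib_left)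
  finally show ?thesis
    using False by simp
qed

lemma sum_hit_prob_at: "(\<Sum>T<N. hit_prob_at I l m n T) = hit_prob_before I l N m n"
proof (induction N arbitrary: m n)
  case 0
  then show ?case by simp
next
  case (Suc N)
  have "(\<Sum>T<Suc N. hit_prob_at I l m n T) = hit_prob_at I l m n 0 + (\<Sum>T<N. hit_prob_at I l m n (Suc T))"
    by (rule sum.lessThan_Suc_shift)
  also have "(\<Sum>T<N. hit_prob_at I l m n (Suc T)) =
      (if m = -1 \<or> n = l then 0
       else I * (\<Sum>T<N. hit_prob_at I l (m - 1) n T) + (1 - I) * (\<Sum>T<N. hit_prob_at I l (m + 1) (n + 1) T))"
    by (simp add: hit_prob_at_Suc sum.distrib sum_distrib_left)
  finally show ?case
    by (simp add: Suc.IH hit_prob_at_0)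
qed

lemma hit_prob_before_nonneg: "0 \<le> I \<Longrightarrow> I \<le> 1 \<Longrightarrow> 0 \<le> hit_prob_before I l N m n"
  by (induction N arbitrary: m n) auto

lemma hit_prob_before_le_power:
  assumes I: "0 \<le> I" "I \<le> 1" and r: "0 \<le> r" "I + (1 - I) * r\<^sup>2 = r"
  shows "-1 \<le> m \<Longrightarrow> hit_prob_before I l N m n \<le> r ^ nat (m + 1)"
proof (induction N arbitrary: m n)
  case 0
  then show ?case using r by simp
next
  case (Suc N)
  show ?case
  proof (cases "m = -1 \<or> n = l")
    case True
    then show ?thesis using r by auto
  next
    case False
    with Suc.prems have "0 \<le> m" by arith
    then obtain k where k: "m = int k" by (rule nonneg_int_cases)
    have "hit_prob_before I l (Suc N) m n =
        I * hit_prob_before I l N (m - 1) n + (1 - I) * hit_prob_before I l N (m + 1) (n + 1)"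
      using False by simp
    also have "\<dots> \<le> I * r ^ k + (1 - I) * r ^ (k + 2)"
      using Suc.IH[of "m - 1" n] Suc.IH[of "m + 1" "n + 1"] k I
      by (intro add_mono mult_left_mono) (auto simp: nat_add_distrib)
    also have "\<dots> = r ^ k * (I + (1 - I) * r\<^sup>2)"
      by (simp add: algebra_simps power_add power2_eq_square)
    also have "\<dots> = r ^ nat (m + 1)"
      using r k by (simp add: nat_add_distrib)
    finally show ?thesis .
  qed
qed

lemma hit_prob_before_le_escape_bound:
  assumes I: "0 \<le> I" "I \<le> 1" and r: "0 \<le> r" "I + (1 - I) * r\<^sup>2 = r" "(1 - I) * r \<le> 1"
  shows "0 \<le> m \<Longrightarrow> n \<le> l \<Longrightarrow>
    hit_prob_before I l N m n \<le> r ^ nat (m + 1) * (1 - ((1 - I) * r) ^ nat (l - n))"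
proof (induction N arbitrary: m n)
  case 0
  have "((1 - I) * r) ^ nat (l - n) \<le> 1"
    using I r by (intro power_le_one) auto
  then show ?case using r by simp
next
  case (Suc N)
  obtain k where k: "m = int k"
    using Suc.prems(1) by (rule nonneg_int_cases)
  show ?case
  proof (cases "n = l")
    case True
    then show ?thesis using Suc.prems by simp
  next
    case False
    define j where "j = nat (l - n - 1)"
    have j: "l - n = int (Suc j)"
      using Suc.prems(2) False unfolding j_def by simp
    have "hit_prob_before I l (Suc N) m n =
        I * hit_prob_before I l N (m - 1) n + (1 - I) * hit_prob_before I l N (m + 1) (n + 1)"
      using k False by simp
    also have "\<dots> \<le> I * r ^ k + (1 - I) * (r ^ (k + 2) * (1 - ((1 - I) * r) ^ j))"
      using hit_prob_before_le_power[OF I r(1,2), of "m - 1" l N n] Suc.IH[of "m + 1" "n + 1"]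
        Suc.prems False k j I
      by (intro add_mono mult_left_mono) (auto simp: nat_add_distrib algebra_simps)
    also have "\<dots> = r ^ k * (I + (1 - I) * r\<^sup>2) - r ^ (k + 1) * ((1 - I) * r) ^ Suc j"
      by (simp add: algebra_simps power_add power2_eq_square)
    also have "\<dots> = r ^ nat (m + 1) * (1 - ((1 - I) * r) ^ nat (l - n))"
      using r k j by (simp add: nat_add_distrib algebra_simps)
    finally show ?thesis .
  qed
qed

lemma hit_prob_before_mono_barrier:
  assumes I: "0 \<le> I" "I \<le> 1" and "l\<^sub>1 \<le> l\<^sub>2"
  shows "n \<le> l\<^sub>1 \<Longrightarrow> hit_prob_before I l\<^sub>1 N m n \<le> hit_prob_before I l\<^sub>2 N m n"
proof (induction N arbitrary: m n)
  case 0
  then show ?case by simp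
next
  case (Suc N)
  show ?case
  proof (cases "m = -1 \<or> n = l\<^sub>1")
    case True
    then show ?thesis
      using hit_prob_before_nonneg[OF I, of l\<^sub>2 "Suc N" m n] by auto
  next
    case False
    then have "n \<noteq> l\<^sub>2" "n + 1 \<le> l\<^sub>1"
      using Suc.prems \<open>l\<^sub>1 \<le> l\<^sub>2\<close> by auto
    then show ?thesis
      using False Suc.IH[of n "m - 1"] Suc.IH[of "n + 1" "m + 1"] Suc.prems I
      by (auto intro!: add_mono mult_left_mono)
  qed
qed

lemma attacker_streak_le_hit_prob_before:
  assumes I: "0 \<le> I" "I \<le> 1"
  shows "-1 \<le> m \<Longrightarrow> n < l \<Longrightarrow> nat (m + 1) < N \<Longrightarrow> I ^ nat (m + 1) \<le> hit_prob_before I l N m n"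
proof (induction N arbitrary: m)
  case 0
  then show ?case by simp
next
  case (Suc N)
  show ?case
  proof (cases "m = -1")
    case True
    then show ?thesis by simp
  next
    case False
    with Suc.prems have "0 \<le> m" by arith
    then obtain k where k: "m = int k" by (rule nonneg_int_cases)
    have "I ^ nat (m + 1) = I * I ^ k + (1 - I) * 0"
      using k by (simp add: nat_add_distrib)
    also have "\<dots> \<le> I * hit_prob_before I l N (m - 1) n + (1 - I) * hit_prob_before I l N (m + 1) (n + 1)"
      using Suc.IH[of "m - 1"] Suc.prems k I hit_prob_before_nonneg[OF I]
      by (intro add_mono mult_left_mono) auto
    also have "\<dots> = hit_prob_before I l (Suc N) m n"
      using False Suc.prems by simp
    finally show ?thesis .
  qed
qed

lemma hit_prob_before_barrier_gap:
  assumes I: "0 \<le> I" "I \<le> 1" and "l\<^sub>1 < l\<^sub>2"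
  shows "0 \<le> m \<Longrightarrow> n \<le> l\<^sub>1 \<Longrightarrow> nat m + 2 * nat (l\<^sub>1 - n) + 2 \<le> N \<Longrightarrow>
    ((1 - I) * I) ^ nat (l\<^sub>1 - n) * I ^ nat (m + 1) \<le> hit_prob_before I l\<^sub>2 N m n - hit_prob_before I l\<^sub>1 N m n"
proof (induction N arbitrary: m n)
  case 0
  then show ?case by simp
next
  case (Suc N)
  obtain k where k: "m = int k"
    using Suc.prems(1) by (rule nonneg_int_cases)
  show ?case
  proof (cases "n = l\<^sub>1")
    case True
    have "I ^ nat (m + 1) \<le> hit_prob_before I l\<^sub>2 (Suc N) m n"
      using attacker_streak_le_hit_prob_before[OF I, of m n l\<^sub>2 "Suc N"] Suc.prems True \<open>l\<^sub>1 < l\<^sub>2\<close> k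
      by (simp add: nat_add_distrib)
    then show ?thesis using True k by simp
  next
    case False
    define j where "j = nat (l\<^sub>1 - n - 1)"
    have j: "l\<^sub>1 - n = int (Suc j)"
      using Suc.prems(2) False unfolding j_def by simp
    have "((1 - I) * I) ^ nat (l\<^sub>1 - n) * I ^ nat (m + 1) = I * 0 + (1 - I) * (((1 - I) * I) ^ j * I ^ (k + 2))"
      using j k by (simp add: nat_add_distrib algebra_simps power_add power2_eq_square)
    also have "\<dots> \<le> I * (hit_prob_before I l\<^sub>2 N (m - 1) n - hit_prob_before I l\<^sub>1 N (m - 1) n)
        + (1 - I) * (hit_prob_before I l\<^sub>2 N (m + 1) (n + 1) - hit_prob_before I l\<^sub>1 N (m + 1) (n + 1))"
      using hit_prob_before_mono_barrier[OF I, of l\<^sub>1 l\<^sub>2 n N "m - 1"] Suc.IH[of "m + 1" "n + 1"]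
        \<open>l\<^sub>1 < l\<^sub>2\<close> Suc.prems False k j I
      by (intro add_mono mult_left_mono) (auto simp: nat_add_distrib algebra_simps)
    also have "\<dots> = hit_prob_before I l\<^sub>2 (Suc N) m n - hit_prob_before I l\<^sub>1 (Suc N) m n"
      using k False Suc.prems \<open>l\<^sub>1 < l\<^sub>2\<close> by (simp add: algebra_simps)
    finally show ?thesis .
  qed
qed

lemma hit_prob_before_tendsto_Q:
  assumes I: "0 \<le> I" "I \<le> 1" and "-1 \<le> m"
  shows "(\<lambda>N. hit_prob_before I l N m n) \<longlonglongrightarrow> Q I l m n"
proof -
  have nonneg: "0 \<le> hit_prob_at I l m n T" for T
    unfolding hit_prob_at_def step_prob_def using I by (intro sum_nonneg) auto
  have "summable (hit_prob_at I l m n)"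
  proof (rule summableI_nonneg_bounded[OF nonneg])
    show "(\<Sum>T<N. hit_prob_at I l m n T) \<le> 1" for N
      using hit_prob_before_le_power[OF I, of 1 m l N n] \<open>-1 \<le> m\<close> by (simp add: sum_hit_prob_at)
  qed
  then have "(\<lambda>N. \<Sum>T<N. hit_prob_at I l m n T) \<longlonglongrightarrow> (\<Sum>T. hit_prob_at I l m n T)"
    by (rule summable_LIMSEQ)
  moreover have "(\<Sum>T. hit_prob_at I l m n T) = Q I l m n"
    unfolding Q_def hit_prob_at_def ..
  ultimately show ?thesis
    by (simp add: sum_hit_prob_at)
qed

lemma Q_le_escape_bound:
  assumes I: "0 \<le> I" "I \<le> 1" and r: "0 \<le> r" "I + (1 - I) * r\<^sup>2 = r" "(1 - I) * r \<le> 1"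
  shows "Q I (int L) (int j) 0 \<le> r ^ (j + 1) * (1 - ((1 - I) * r) ^ L)"
proof (rule LIMSEQ_le_const2[OF hit_prob_before_tendsto_Q[OF I]])
  show "\<exists>N. \<forall>n\<ge>N. hit_prob_before I (int L) n (int j) 0 \<le> r ^ (j + 1) * (1 - ((1 - I) * r) ^ L)"
    using hit_prob_before_le_escape_bound[OF I r, of "int j" 0 "int L"] by (auto simp: nat_add_distrib)
qed simp

lemma Q_strict_mono_barrier:
  assumes I: "0 < I" "I < 1" and "L\<^sub>1 < L\<^sub>2"
  shows "Q I (int L\<^sub>1) (int j) 0 < Q I (int L\<^sub>2) (int j) 0"
proof -
  let ?gap = "((1 - I) * I) ^ L\<^sub>1 * I ^ (j + 1)"
  have "(\<lambda>N. hit_prob_before I (int L\<^sub>2) N (int j) 0 - hit_prob_before I (int L\<^sub>1) N (int j) 0)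
      \<longlonglongrightarrow> Q I (int L\<^sub>2) (int j) 0 - Q I (int L\<^sub>1) (int j) 0"
    using I by (intro tendsto_diff hit_prob_before_tendsto_Q) auto
  moreover have "\<forall>N\<ge>j + 2 * L\<^sub>1 + 2. ?gap \<le> hit_prob_before I (int L\<^sub>2) N (int j) 0 - hit_prob_before I (int L\<^sub>1) N (int j) 0"
    using hit_prob_before_barrier_gap[of I "int L\<^sub>1" "int L\<^sub>2" "int j" 0] I \<open>L\<^sub>1 < L\<^sub>2\<close>
    by (auto simp: nat_add_distrib)
  ultimately have "?gap \<le> Q I (int L\<^sub>2) (int j) 0 - Q I (int L\<^sub>1) (int j) 0"
    by (intro LIMSEQ_le_const) auto
  moreover have "0 < ?gap"
    using I by simp
  ultimately show ?thesis by simp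
qed

lemma Q_less_one:
  assumes "0 \<le> I" "I < 1"
  shows "Q I (int L) (int j) 0 < 1"
proof -
  have "Q I (int L) (int j) 0 \<le> 1 ^ (j + 1) * (1 - ((1 - I) * 1) ^ L)"
    using assms by (intro Q_le_escape_bound) auto
  moreover have "0 < (1 - I) ^ L"
    using assms by simp
  ultimately show ?thesis by simp
qed

lemma Q_le_Pfun_escape_bound:
  assumes I: "0 \<le> I" "I < 1/2"
  shows "Q I (int L) (int j) 0 \<le> Pfun I j * (1 - I ^ L)"
proof -
  define r where "r = I / (1 - I)"
  have r_escape: "(1 - I) * r = I"
    using I by (simp add: r_def)
  then have "I + (1 - I) * r\<^sup>2 = I + I * r"
    by (simp add: power2_eq_square)
  also have "\<dots> = r"
    using r_escape by (simp add: left_diff_distrib)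
  finally have "Q I (int L) (int j) 0 \<le> r ^ (j + 1) * (1 - I ^ L)"
    using Q_le_escape_bound[of I r L j] I r_escape by (simp add: r_def)
  then show ?thesis
    using I by (simp add: Pfun_def r_def)
qed

lemma Q_le_Pfun:
  assumes "0 \<le> I" "I < 1"
  shows "Q I (int L) (int j) 0 \<le> Pfun I j"
proof (cases "I < 1/2")
  case True
  have "0 \<le> Pfun I j * I ^ L"
    using assms by (simp add: Pfun_def)
  then show ?thesis
    using Q_le_Pfun_escape_bound[OF assms(1) True, of L j] by (simp add: right_diff_distrib)
next
  case False
  then show ?thesis
    using Q_less_one[OF assms, of L j] by (simp add: Pfun_def)
qed

lemma Q_less_Pfun:
  assumes "0 < I" "I < 1"
  shows "Q I (int L) (int j) 0 < Pfun I j"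
proof (cases "I < 1/2")
  case True
  have "0 < Pfun I j * I ^ L"
    using assms by (simp add: Pfun_def)
  then show ?thesis
    using Q_le_Pfun_escape_bound[of I L j] True assms by (simp add: right_diff_distrib)
next
  case False
  then show ?thesis
    using Q_less_one[of I L j] assms by (simp add: Pfun_def)
qed

text \<open>The probability that the attacker has mined exactly k blocks when the honest chain
  reaches depth Z + 1.\<close>

definition race_weight :: "real \<Rightarrow> nat \<Rightarrow> nat \<Rightarrow> real" where
  "race_weight I Z k = real ((k + Z) choose k) * I ^ k * (1 - I) ^ (Z + 1)"

lemma race_weight_nonneg: "0 \<le> I \<Longrightarrow> I \<le> 1 \<Longrightarrow> 0 \<le> race_weight I Z k"
  by (simp add: race_weight_def)

lemma race_weight_pos: "0 < I \<Longrightarrow> I < 1 \<Longrightarrow> 0 < race_weight I Z k"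
  by (simp add: race_weight_def)

lemma Ps_TR_eq: "Ps_TR I Z L = 1 - (\<Sum>k=0..Z+1. race_weight I Z k * (1 - Q I (int L) (int (Z + 1 - k)) 0))"
  by (simp add: Ps_TR_def race_weight_def)

lemma Ps_TU_eq: "Ps_TU I Z = 1 - (\<Sum>k=0..Z+1. race_weight I Z k * (1 - Pfun I (Z + 1 - k)))"
  by (simp add: Ps_TU_def race_weight_def)

lemma weighted_deficit_mono:
  fixes w p q :: "nat \<Rightarrow> real"
  assumes "\<And>k. k \<in> A \<Longrightarrow> 0 \<le> w k" "\<And>k. k \<in> A \<Longrightarrow> p k \<le> q k"
  shows "(\<Sum>k\<in>A. w k * (1 - q k)) \<le> (\<Sum>k\<in>A. w k * (1 - p k))"
  using assms by (intro sum_mono mult_left_mono) auto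

lemma weighted_deficit_strict_mono:
  fixes w p q :: "nat \<Rightarrow> real"
  assumes "finite A" "A \<noteq> {}" "\<And>k. k \<in> A \<Longrightarrow> 0 < w k" "\<And>k. k \<in> A \<Longrightarrow> p k < q k"
  shows "(\<Sum>k\<in>A. w k * (1 - q k)) < (\<Sum>k\<in>A. w k * (1 - p k))"
  using assms by (intro sum_strict_mono mult_strict_left_mono) auto

lemma Ps_TR_strict_mono:
  assumes "0 < I" "I < 1" "L\<^sub>1 < L\<^sub>2"
  shows "Ps_TR I Z L\<^sub>1 < Ps_TR I Z L\<^sub>2"
proof -
  have "(\<Sum>k=0..Z+1. race_weight I Z k * (1 - Q I (int L\<^sub>2) (int (Z + 1 - k)) 0))
      < (\<Sum>k=0..Z+1. race_weight I Z k * (1 - Q I (int L\<^sub>1) (int (Z + 1 - k)) 0))"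
    using assms by (intro weighted_deficit_strict_mono race_weight_pos Q_strict_mono_barrier) auto
  then show ?thesis
    unfolding Ps_TR_eq by linarith
qed

lemma Ps_TR_le_Ps_TU:
  assumes "0 \<le> I" "I < 1"
  shows "Ps_TR I Z L \<le> Ps_TU I Z"
proof -
  have "(\<Sum>k=0..Z+1. race_weight I Z k * (1 - Pfun I (Z + 1 - k)))
      \<le> (\<Sum>k=0..Z+1. race_weight I Z k * (1 - Q I (int L) (int (Z + 1 - k)) 0))"
    using assms by (intro weighted_deficit_mono race_weight_nonneg Q_le_Pfun) auto
  then show ?thesis
    unfolding Ps_TR_eq Ps_TU_eq by linarith
qed

lemma Ps_TR_less_Ps_TU:
  assumes "0 < I" "I < 1"
  shows "Ps_TR I Z L < Ps_TU I Z"
proof -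
  have "(\<Sum>k=0..Z+1. race_weight I Z k * (1 - Pfun I (Z + 1 - k)))
      < (\<Sum>k=0..Z+1. race_weight I Z k * (1 - Q I (int L) (int (Z + 1 - k)) 0))"
    using assms by (intro weighted_deficit_strict_mono race_weight_pos Q_less_Pfun) auto
  then show ?thesis
    unfolding Ps_TR_eq Ps_TU_eq by linarith
qed

text \<open>The term \<open>k = 0\<close> has positive weight even for \<open>I = 0\<close>.\<close>

lemma Ps_TR_less_one:
  assumes "0 \<le> I" "I < 1"
  shows "Ps_TR I Z L < 1"
proof -
  have "0 < (\<Sum>k=0..Z+1. race_weight I Z k * (1 - Q I (int L) (int (Z + 1 - k)) 0))"
  proof (rule sum_pos2[where i = 0])
    have "Q I (int L) (int (Z + 1)) 0 < 1"
      by (rule Q_less_one[OF assms])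
    then show "0 < race_weight I Z 0 * (1 - Q I (int L) (int (Z + 1 - 0)) 0)"
      using assms by (simp add: race_weight_def)
    show "0 \<le> race_weight I Z k * (1 - Q I (int L) (int (Z + 1 - k)) 0)" for k
      using Q_less_one[OF assms, of L "Z + 1 - k"] race_weight_nonneg[of I Z k] assms by simp
  qed auto
  then show ?thesis
    unfolding Ps_TR_eq by simp
qed

theorem corollary1:
  fixes I :: real and Z :: nat
  assumes "0 \<le> I" and "I < 1"
  shows "(0 < I \<longrightarrow> (\<forall>L1 L2. 1 \<le> L1 \<longrightarrow> L1 < L2 \<longrightarrow> Ps_TR I Z L1 < Ps_TR I Z L2))
       \<and> (\<forall>L\<ge>1. Ps_TR I Z L \<le> Ps_TU I Z \<and> (0 < I \<longrightarrow> Ps_TR I Z L < Ps_TU I Z))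
       \<and> (\<forall>L\<ge>1. Ps_TR I Z L < 1)"
  using assms Ps_TR_strict_mono Ps_TR_le_Ps_TU Ps_TR_less_Ps_TU Ps_TR_less_one by blast

end
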